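(* Let $A=\{a_1,a_2,\dots,a_n\}\subseteq\mathbb{Z}_N$ be a $B_t[N;1]$ set. In the group $\mathbb{Z}_N \times \mathbb{Z}_{2t+1}$, let \[S\triangleq \{ (a_i,1) : a_i \in A\}.\] Then $\mathbb{Z}_N \times \mathbb{Z}_{2t+1} \ge \{-1,1\} \diamond_t S$.
   Context: A subset $A\subseteq\mathbb{Z}_N$ is a $B_t[N;1]$ set if the sums of any $t$ (not necessarily distinct) elements of $A$ are all different modulo $N$, i.e., distinct multisets of $t$ elements of $A$ have distinct sums in $\mathbb{Z}_N$. For a finite Abelian group $G$, a finite set $M\subseteq\mathbb{Z}\setminus\{0\}$ and $S=\{s_1,\dots,s_n\}\subseteq G$, we write $G\ge M\diamond_t S$ if the elements $\mathbf{e}\cdot(s_1,\dots,s_n)=\sum_i e_is_i$, over all $\mathbf{e}\in(M\cup\{0\})^n$ with $1\le\mathrm{wt}(\mathbf{e})\le t$, are all distinct and non-zero in $G$ (here $e_is_i$ is the $e_i$-fold group multiple, $\mathrm{wt}$ the Hamming weight). *)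

theory Defs
  imports Main "HOL-Library.Multiset"
begin

text \<open>Z_N is represented by the integers modulo N (canonical representatives 0..N-1).
A B_t[N;1] set: a subset of Z_N such that distinct multisets of t elements
have distinct sums modulo N.\<close>
definition Bt_set :: "int \<Rightarrow> nat \<Rightarrow> int set \<Rightarrow> bool" where
  "Bt_set N t A \<longleftrightarrow> A \<subseteq> {0..<N} \<and>
     (\<forall>M1 M2. set_mset M1 \<subseteq> A \<longrightarrow> set_mset M2 \<subseteq> A \<longrightarrow>
        size M1 = t \<longrightarrow> size M2 = t \<longrightarrow>
        sum_mset M1 mod N = sum_mset M2 mod N \<longrightarrow> M1 = M2)"

definition wt :: "nat \<Rightarrow> (nat \<Rightarrow> int) \<Rightarrow> nat" where
  "wt n e = card {i. i < n \<and> e i \<noteq> 0}"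

definition coeffs :: "nat \<Rightarrow> int set \<Rightarrow> nat \<Rightarrow> (nat \<Rightarrow> int) set" where
  "coeffs n M t = {e. (\<forall>i<n. e i \<in> M \<union> {0}) \<and> (\<forall>i. n \<le> i \<longrightarrow> e i = 0)
                      \<and> 1 \<le> wt n e \<and> wt n e \<le> t}"

text \<open>The element e \<cdot> (s_0,...,s_{n-1}) of the group Z_N \<times> Z_K, with elements
of Z_N \<times> Z_K represented by pairs of integers reduced mod N and mod K.\<close>
definition lincomb :: "int \<Rightarrow> int \<Rightarrow> nat \<Rightarrow> (nat \<Rightarrow> int \<times> int) \<Rightarrow> (nat \<Rightarrow> int) \<Rightarrow> int \<times> int" where
  "lincomb N K n s e = ((\<Sum>i<n. e i * fst (s i)) mod N, (\<Sum>i<n. e i * snd (s i)) mod K)"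

text \<open>Z_N \<times> Z_K \<ge> M \<diamond>_t {s_0,...,s_{n-1}}: all the combinations are distinct and nonzero.\<close>
definition ge_diamond :: "int \<Rightarrow> int \<Rightarrow> int set \<Rightarrow> nat \<Rightarrow> nat \<Rightarrow> (nat \<Rightarrow> int \<times> int) \<Rightarrow> bool" where
  "ge_diamond N K M t n s \<longleftrightarrow>
     inj_on (lincomb N K n s) (coeffs n M t) \<and>
     (\<forall>e\<in>coeffs n M t. lincomb N K n s e \<noteq> (0, 0))"

end

theory Submission
  imports Defs
begin

(* Write e in {-1,0,1}^n as the difference of the indicator vectors of its level sets
   P = e^-1(1) and Q = e^-1(-1). If e and e' give the same element and wt e + wt e' <= 2t,
   the second coordinate gives |P| - |Q| = |P'| - |Q'| modulo 2t+1, hence exactly, so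
   |P| + |Q'| = |P'| + |Q| <= t. The first coordinate says that the multisets
   {a_i : i in P + Q'} and {a_i : i in P' + Q} have congruent sums; padded to t elements
   they become equal by the B_t property, and since i -> a_i is injective so do the index
   multisets P + Q' and P' + Q. Comparing multiplicities gives e = e'. Taking e' = 0
   shows that no combination vanishes. *)

definition level_set :: "nat \<Rightarrow> (nat \<Rightarrow> int) \<Rightarrow> int \<Rightarrow> nat set" where
  "level_set n e c = {i\<in>{..<n}. e i = c}"

lemma finite_level_set [simp]: "finite (level_set n e c)"
  by (simp add: level_set_def)

lemma level_set_subset: "level_set n e c \<subseteq> {..<n}"
  by (auto simp: level_set_def)

lemma sum_sign_vector:
  fixes e f :: "nat \<Rightarrow> int"
  assumes "\<forall>i<n. e i \<in> {-1, 0, 1}"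
  shows "(\<Sum>i<n. e i * f i) = sum f (level_set n e 1) - sum f (level_set n e (-1))"
proof -
  have "(\<Sum>i<n. e i * f i) =
        (\<Sum>i<n. (if e i = 1 then f i else 0) - (if e i = -1 then f i else 0))"
    using assms by (intro sum.cong) auto
  also have "\<dots> = sum f (level_set n e 1) - sum f (level_set n e (-1))"
    by (simp only: sum_subtractf sum.inter_filter[OF finite_lessThan] level_set_def)
  finally show ?thesis .
qed

lemma wt_sign_vector:
  assumes "\<forall>i<n. e i \<in> {-1, 0, 1}"
  shows "wt n e = card (level_set n e 1) + card (level_set n e (-1))"
proof -
  have "{i. i < n \<and> e i \<noteq> 0} = level_set n e 1 \<union> level_set n e (-1)"
    using assms by (auto simp: level_set_def)
  then show ?thesis
    unfolding wt_def by (simp add: card_Un_disjoint level_set_def disjoint_iff)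
qed

lemma sign_vector_eq_if_level_sets_balanced:
  assumes "e i \<in> {-1, 0, 1}" "e' i \<in> {-1, 0, 1}" "i < n"
    and "mset_set (level_set n e 1) + mset_set (level_set n e' (-1)) =
         mset_set (level_set n e' 1) + mset_set (level_set n e (-1))"
  shows "e i = e' i"
proof -
  have "count (mset_set (level_set n e 1) + mset_set (level_set n e' (-1))) i =
        count (mset_set (level_set n e' 1) + mset_set (level_set n e (-1))) i"
    using assms(4) by simp
  with assms(1-3) show ?thesis
    by (auto simp: count_mset_set' level_set_def split: if_splits)
qed

lemma mod_eq_imp_eq_if_abs_diff_less:
  fixes x y K :: int
  assumes "x mod K = y mod K" and "\<bar>x - y\<bar> < K"
  shows "x = y"
proof (rule ccontr)
  assume "x \<noteq> y"
  moreover have "K dvd x - y"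
    using assms(1) by (simp add: mod_eq_dvd_iff)
  ultimately have "\<bar>K\<bar> \<le> \<bar>x - y\<bar>"
    by (intro dvd_imp_le_int) auto
  with assms(2) show False
    by linarith
qed

lemma Bt_set_sum_mset_cong_imp_eq:
  assumes "Bt_set N t A" and "set_mset X \<subseteq> A" "set_mset Y \<subseteq> A"
    and "size X = size Y" "size X \<le> t"
    and "sum_mset X mod N = sum_mset Y mod N"
  shows "X = Y"
proof (cases "X = {#}")
  case True
  with assms(4) show ?thesis
    by simp
next
  case False
  then obtain x where "x \<in> A"
    using assms(2) by fastforce
  define R where "R = replicate_mset (t - size X) x"
  have "set_mset (X + R) \<subseteq> A" "set_mset (Y + R) \<subseteq> A"
    using assms(2,3) \<open>x \<in> A\<close> by (auto simp: R_def)
  moreover have "size (X + R) = t" "size (Y + R) = t"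
    using assms(4,5) by (simp_all add: R_def)
  moreover have "sum_mset (X + R) mod N = sum_mset (Y + R) mod N"
    using mod_add_cong[OF assms(6) refl] by simp
  ultimately have "X + R = Y + R"
    using assms(1) unfolding Bt_set_def by blast
  then show ?thesis
    by simp
qed

lemma level_sets_balanced_if_sum_cong:
  assumes e: "\<forall>i<n. e i \<in> {-1, 0, 1}" and e': "\<forall>i<n. e' i \<in> {-1, 0, 1}"
    and "wt n e + wt n e' \<le> 2 * t"
    and "(\<Sum>i<n. e i) mod (2 * int t + 1) = (\<Sum>i<n. e' i) mod (2 * int t + 1)"
  shows "card (level_set n e 1) + card (level_set n e' (-1)) =
         card (level_set n e' 1) + card (level_set n e (-1))"
proof -
  define p where "p = int (card (level_set n e 1)) - int (card (level_set n e (-1)))"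
  define p' where "p' = int (card (level_set n e' 1)) - int (card (level_set n e' (-1)))"
  have "p = p'"
  proof (rule mod_eq_imp_eq_if_abs_diff_less)
    show "p mod (2 * int t + 1) = p' mod (2 * int t + 1)"
      using assms(4) sum_sign_vector[OF e, of "\<lambda>_. 1"] sum_sign_vector[OF e', of "\<lambda>_. 1"]
      by (simp add: p_def p'_def)
    show "\<bar>p - p'\<bar> < 2 * int t + 1"
      using assms(3) wt_sign_vector[OF e] wt_sign_vector[OF e'] unfolding p_def p'_def
      by linarith
  qed
  then show ?thesis
    unfolding p_def p'_def by linarith
qed

lemma sign_vectors_eq_if_lincomb_eq:
  fixes a :: "nat \<Rightarrow> int"
  assumes "Bt_set N t (a ` {..<n})" "inj_on a {..<n}"
    and e: "\<forall>i<n. e i \<in> {-1, 0, 1}" and e': "\<forall>i<n. e' i \<in> {-1, 0, 1}"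
    and wt: "wt n e + wt n e' \<le> 2 * t"
    and eq: "lincomb N (2 * int t + 1) n (\<lambda>i. (a i, 1)) e =
             lincomb N (2 * int t + 1) n (\<lambda>i. (a i, 1)) e'"
    and "i < n"
  shows "e i = e' i"
proof -
  define P Q P' Q' where "P = level_set n e 1" and "Q = level_set n e (-1)"
    and "P' = level_set n e' 1" and "Q' = level_set n e' (-1)"
  define I where "I = mset_set P + mset_set Q'"
  define I' where "I' = mset_set P' + mset_set Q"
  have cong_fst: "(sum a P - sum a Q) mod N = (sum a P' - sum a Q') mod N"
    and cong_snd: "(\<Sum>i<n. e i) mod (2 * int t + 1) = (\<Sum>i<n. e' i) mod (2 * int t + 1)"
    using eq sum_sign_vector[OF e, of a] sum_sign_vector[OF e', of a]
    by (simp_all add: lincomb_def P_def Q_def P'_def Q'_def)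
  have I_sub: "set_mset I \<subseteq> {..<n}" "set_mset I' \<subseteq> {..<n}"
    using level_set_subset by (auto simp: I_def I'_def P_def Q_def P'_def Q'_def)
  have balanced: "size I = size I'"
    using level_sets_balanced_if_sum_cong[OF e e' wt cong_snd]
    by (simp add: I_def I'_def P_def Q_def P'_def Q'_def)
  have "size I \<le> t"
    using wt wt_sign_vector[OF e] wt_sign_vector[OF e'] balanced
    by (simp add: I_def I'_def P_def Q_def P'_def Q'_def)
  moreover have "sum_mset (image_mset a I) mod N = sum_mset (image_mset a I') mod N"
  proof -
    have sums: "sum_mset (image_mset a I) = (sum a P - sum a Q) + (sum a Q + sum a Q')"
      "sum_mset (image_mset a I') = (sum a P' - sum a Q') + (sum a Q + sum a Q')"
      by (simp_all add: I_def I'_def sum_unfold_sum_mset P_def Q_def P'_def Q'_def)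
    show ?thesis
      unfolding sums by (rule mod_add_cong[OF cong_fst refl])
  qed
  ultimately have "image_mset a I = image_mset a I'"
    using Bt_set_sum_mset_cong_imp_eq[OF assms(1)] I_sub balanced by (simp add: image_mono)
  moreover have "inj_on a (set_mset I \<union> set_mset I')"
    using inj_on_subset[OF assms(2)] I_sub by simp
  ultimately have "I = I'"
    using image_mset_eq_image_mset_plusD[of a I I' "{#}"] by auto
  then show ?thesis
    using sign_vector_eq_if_level_sets_balanced[of e i e' n] e e' \<open>i < n\<close>
    by (simp add: I_def I'_def P_def Q_def P'_def Q'_def)
qed

lemma coeffs_sign_vectorD:
  assumes "e \<in> coeffs n {-1, 1} t"
  shows "\<forall>i<n. e i \<in> {-1, 0, 1}" "\<forall>i\<ge>n. e i = 0" "wt n e \<le> t" "e \<noteq> (\<lambda>_. 0)"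
  using assms by (auto simp: coeffs_def wt_def)

theorem theorem9:
  fixes N :: int and t n :: nat and a :: "nat \<Rightarrow> int"
  assumes "N \<ge> 1"
    and "inj_on a {..<n}"
    and "Bt_set N t (a ` {..<n})"
  shows "ge_diamond N (2 * int t + 1) {-1, 1} t n (\<lambda>i. (a i, 1))"
proof -
  let ?s = "lincomb N (2 * int t + 1) n (\<lambda>i. (a i, 1))"
  have coeffs_eq: "e = e'"
    if "e \<in> coeffs n {-1, 1} t" and e': "\<forall>i<n. e' i \<in> {-1, 0, 1}" "\<forall>i\<ge>n. e' i = 0"
      "wt n e' \<le> t" and "?s e = ?s e'" for e e'
  proof
    fix i
    note e = coeffs_sign_vectorD[OF that(1)]
    show "e i = e' i"
    proof (cases "i < n")
      case True
      with e e' \<open>?s e = ?s e'\<close> show ?thesis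
        by (intro sign_vectors_eq_if_lincomb_eq[OF assms(3,2)]) auto
    next
      case False
      with e(2) e'(2) show ?thesis
        by simp
    qed
  qed
  have "inj_on ?s (coeffs n {-1, 1} t)"
    using coeffs_sign_vectorD coeffs_eq by (intro inj_onI) metis
  moreover have "?s e \<noteq> (0, 0)" if "e \<in> coeffs n {-1, 1} t" for e
  proof
    assume "?s e = (0, 0)"
    moreover have "?s (\<lambda>_. 0) = (0, 0)"
      by (simp add: lincomb_def)
    ultimately have "e = (\<lambda>_. 0)"
      using that by (intro coeffs_eq) (simp_all add: wt_def)
    with coeffs_sign_vectorD(4)[OF that] show False ..
  qed
  ultimately show ?thesis
    unfolding ge_diamond_def by blast
qed

end
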